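(* Let $\Gamma$ be an angled $G$-graph such that for each subgroup $K\le G$, every regular $K$-section of $\Gamma$ has curvature $\le\alpha$, where $\alpha\le0$. Suppose $H$ is a subgroup of $G$ and $\Delta$ is a non-empty spurless $H$-section of $\Gamma$. Then: (1) if $\Delta$ contains an edge, $\kappa(H,\Delta)\le\alpha$; (2) $\kappa(H,\Delta)>0$ if and only if $\Delta$ is a single vertex and $H$ is a finite group.
   Context: An angled $G$-graph is a graph with a $G$-action and a $G$-invariant map $\measuredangle$ from edges to $\mathbb R$. For a group $K$, $|K|^{-1}=1/|K|$ if $K$ finite, else $0$. For a graph $\Delta$ with a $K$-action and finitely many $K$-orbits of cells, $\kappa(K,\Delta)=2\pi|K|^{-1}-\sum_v\pi|K_v|^{-1}+\sum_e(\pi-\measuredangle(e))|K_e|^{-1}$ (sums over orbit representatives of vertices and edges; $K_v,K_e$ stabilizers in $K$); this is the curvature of $\Delta$. For $H\le G$, an $H$-section of $\Gamma$ is an $H$-invariant subgraph with finitely many $H$-orbits of cells; it is spurless if it has no vertex of valence one, and regular if it is spurless, connected, and has at least one edge. *)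

theory Defs
  imports "HOL-Algebra.Group" "HOL-Library.Multiset" Complex_Main
begin

text \<open>A graph is given by a vertex set V, an edge set E and an endpoint map
  ends assigning to each edge the multiset of its two endpoints (loops and
  multiple edges allowed).\<close>

definition graph :: "'v set \<Rightarrow> 'e set \<Rightarrow> ('e \<Rightarrow> 'v multiset) \<Rightarrow> bool" where
  "graph V E ends \<longleftrightarrow> (\<forall>e\<in>E. size (ends e) = 2 \<and> set_mset (ends e) \<subseteq> V)"

definition G_graph ::
  "('g, 'b) monoid_scheme \<Rightarrow> 'v set \<Rightarrow> 'e set \<Rightarrow> ('e \<Rightarrow> 'v multiset)
    \<Rightarrow> ('g \<Rightarrow> 'v \<Rightarrow> 'v) \<Rightarrow> ('g \<Rightarrow> 'e \<Rightarrow> 'e) \<Rightarrow> bool" where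
  "G_graph G V E ends actv acte \<longleftrightarrow>
     group G \<and> graph V E ends \<and>
     (\<forall>g\<in>carrier G. actv g ` V \<subseteq> V \<and> acte g ` E \<subseteq> E) \<and>
     (\<forall>v\<in>V. actv \<one>\<^bsub>G\<^esub> v = v) \<and> (\<forall>e\<in>E. acte \<one>\<^bsub>G\<^esub> e = e) \<and>
     (\<forall>g\<in>carrier G. \<forall>h\<in>carrier G. \<forall>v\<in>V. actv (g \<otimes>\<^bsub>G\<^esub> h) v = actv g (actv h v)) \<and>
     (\<forall>g\<in>carrier G. \<forall>h\<in>carrier G. \<forall>e\<in>E. acte (g \<otimes>\<^bsub>G\<^esub> h) e = acte g (acte h e)) \<and>
     (\<forall>g\<in>carrier G. \<forall>e\<in>E. ends (acte g e) = image_mset (actv g) (ends e))"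

definition angled_G_graph ::
  "('g, 'b) monoid_scheme \<Rightarrow> 'v set \<Rightarrow> 'e set \<Rightarrow> ('e \<Rightarrow> 'v multiset)
    \<Rightarrow> ('g \<Rightarrow> 'v \<Rightarrow> 'v) \<Rightarrow> ('g \<Rightarrow> 'e \<Rightarrow> 'e) \<Rightarrow> ('e \<Rightarrow> real) \<Rightarrow> bool" where
  "angled_G_graph G V E ends actv acte ang \<longleftrightarrow>
     G_graph G V E ends actv acte \<and>
     (\<forall>g\<in>carrier G. \<forall>e\<in>E. ang (acte g e) = ang e)"

definition inv_card :: "'a set \<Rightarrow> real" where
  "inv_card K = (if finite K then 1 / real (card K) else 0)"

definition orbit :: "'g set \<Rightarrow> ('g \<Rightarrow> 'a \<Rightarrow> 'a) \<Rightarrow> 'a \<Rightarrow> 'a set" where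
  "orbit K act x = (\<lambda>k. act k x) ` K"

definition orbits :: "'g set \<Rightarrow> ('g \<Rightarrow> 'a \<Rightarrow> 'a) \<Rightarrow> 'a set \<Rightarrow> 'a set set" where
  "orbits K act S = orbit K act ` S"

definition stab :: "'g set \<Rightarrow> ('g \<Rightarrow> 'a \<Rightarrow> 'a) \<Rightarrow> 'a \<Rightarrow> 'g set" where
  "stab K act x = {k \<in> K. act k x = x}"

definition curvature ::
  "'g set \<Rightarrow> ('g \<Rightarrow> 'v \<Rightarrow> 'v) \<Rightarrow> ('g \<Rightarrow> 'e \<Rightarrow> 'e) \<Rightarrow> ('e \<Rightarrow> real)
    \<Rightarrow> 'v set \<Rightarrow> 'e set \<Rightarrow> real" where
  "curvature K actv acte ang DV DE =
     2 * pi * inv_card K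
     - (\<Sum>Orb\<in>orbits K actv DV. pi * inv_card (stab K actv (SOME v. v \<in> Orb)))
     + (\<Sum>Orb\<in>orbits K acte DE. (pi - ang (SOME e. e \<in> Orb)) * inv_card (stab K acte (SOME e. e \<in> Orb)))"

definition H_section ::
  "'g set \<Rightarrow> 'v set \<Rightarrow> 'e set \<Rightarrow> ('e \<Rightarrow> 'v multiset)
    \<Rightarrow> ('g \<Rightarrow> 'v \<Rightarrow> 'v) \<Rightarrow> ('g \<Rightarrow> 'e \<Rightarrow> 'e) \<Rightarrow> 'v set \<Rightarrow> 'e set \<Rightarrow> bool" where
  "H_section H V E ends actv acte DV DE \<longleftrightarrow>
     DV \<subseteq> V \<and> DE \<subseteq> E \<and> (\<forall>e\<in>DE. set_mset (ends e) \<subseteq> DV) \<and>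
     (\<forall>h\<in>H. actv h ` DV \<subseteq> DV \<and> acte h ` DE \<subseteq> DE) \<and>
     finite (orbits H actv DV) \<and> finite (orbits H acte DE)"

text \<open>Valence one: exactly one edge-end at v (a loop counts twice).\<close>
definition valence_one :: "'e set \<Rightarrow> ('e \<Rightarrow> 'v multiset) \<Rightarrow> 'v \<Rightarrow> bool" where
  "valence_one DE ends v \<longleftrightarrow>
     finite {e \<in> DE. v \<in># ends e} \<and> (\<Sum>e\<in>{e \<in> DE. v \<in># ends e}. count (ends e) v) = 1"

definition spurless :: "'v set \<Rightarrow> 'e set \<Rightarrow> ('e \<Rightarrow> 'v multiset) \<Rightarrow> bool" where
  "spurless DV DE ends \<longleftrightarrow> (\<forall>v\<in>DV. \<not> valence_one DE ends v)"

definition graph_connected :: "'v set \<Rightarrow> 'e set \<Rightarrow> ('e \<Rightarrow> 'v multiset) \<Rightarrow> bool" where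
  "graph_connected DV DE ends \<longleftrightarrow>
     (\<forall>u\<in>DV. \<forall>w\<in>DV. (u, w) \<in> {(x, y). \<exists>e\<in>DE. ends e = {#x, y#}}\<^sup>*)"

definition regular_section ::
  "'g set \<Rightarrow> 'v set \<Rightarrow> 'e set \<Rightarrow> ('e \<Rightarrow> 'v multiset)
    \<Rightarrow> ('g \<Rightarrow> 'v \<Rightarrow> 'v) \<Rightarrow> ('g \<Rightarrow> 'e \<Rightarrow> 'e) \<Rightarrow> 'v set \<Rightarrow> 'e set \<Rightarrow> bool" where
  "regular_section H V E ends actv acte DV DE \<longleftrightarrow>
     H_section H V E ends actv acte DV DE \<and> spurless DV DE ends \<and>
     graph_connected DV DE ends \<and> DE \<noteq> {}"

end

theory Submission
  imports Defs
begin

text \<open>Part (1) is by induction on the number of H-orbits of vertices. Let C be the component of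
  an edge of Delta and K its stabilizer in H; then C is a regular K-section, so
  kappa(K, C) <= alpha. Distinct H-translates of C are disjoint, so together they contribute
  kappa(K, C) - 2 pi |K|^-1 to kappa(H, Delta), and removing them leaves a spurless H-section
  Delta' with fewer vertex orbits:
  kappa(H, Delta) = kappa(K, C) - 2 pi |K|^-1 + kappa(H, Delta').
  Finally kappa(H, Delta') <= 2 pi |H|^-1 <= 2 pi |K|^-1, by induction (which even gives
  kappa(H, Delta') <= alpha <= 0) or because Delta' has no edges.

  For (2), an edgeless section has curvature 2 pi |H|^-1 - sum pi |H_v|^-1. Two vertex orbits,
  or one orbit whose stabilizer has index at least two, already cost 2 pi |H|^-1; so the curvature
  is positive exactly for a single vertex fixed by a finite H.\<close>

section \<open>Orbit sums of group actions\<close>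

definition orbit_sum :: "'g set \<Rightarrow> ('g \<Rightarrow> 'a \<Rightarrow> 'a) \<Rightarrow> ('a \<Rightarrow> real) \<Rightarrow> 'a set \<Rightarrow> real" where
  "orbit_sum K act c T =
     (\<Sum>Orb\<in>orbits K act T. c (SOME x. x \<in> Orb) * inv_card (stab K act (SOME x. x \<in> Orb)))"

lemma curvature_eq_orbit_sum:
  "curvature K actv acte ang DV DE =
     2 * pi * inv_card K - orbit_sum K actv (\<lambda>_. pi) DV + orbit_sum K acte (\<lambda>e. pi - ang e) DE"
  unfolding curvature_def orbit_sum_def by simp

lemma inv_card_nonneg: "0 \<le> inv_card K"
  unfolding inv_card_def by auto

lemma inv_card_antimono:
  assumes "K \<subseteq> H" "K \<noteq> {}"
  shows "inv_card H \<le> inv_card K"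
proof (cases "finite H")
  case True
  then have "finite K" using assms finite_subset by blast
  then have "card K \<le> card H" "0 < card K" using assms True card_mono card_gt_0_iff by auto
  then show ?thesis unfolding inv_card_def using True \<open>finite K\<close> by (simp add: frac_le)
qed (simp add: inv_card_def)

lemma orbit_sum_nonneg: "(\<And>x. 0 \<le> c x) \<Longrightarrow> 0 \<le> orbit_sum K act c T"
  unfolding orbit_sum_def by (intro sum_nonneg mult_nonneg_nonneg inv_card_nonneg)

lemma orbit_sum_empty [simp]: "orbit_sum K act c {} = 0"
  unfolding orbit_sum_def orbits_def by simp

lemma (in group) two_card_subgroup_le:
  assumes H: "subgroup H G" and fin: "finite H" and St: "subgroup St G" and StH: "St \<subseteq> H"
    and g: "g \<in> H" "g \<notin> St"
  shows "2 * card St \<le> card H"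
proof -
  have gG: "g \<in> carrier G" using subgroup.mem_carrier[OF H g(1)] .
  have StG: "\<And>s. s \<in> St \<Longrightarrow> s \<in> carrier G" using subgroup.mem_carrier[OF St] .
  have inj: "inj_on ((\<otimes>) g) St"
    by (rule inj_onI) (use gG StG in simp)
  have disj: "St \<inter> (\<otimes>) g ` St = {}"
  proof (rule ccontr)
    assume "St \<inter> (\<otimes>) g ` St \<noteq> {}"
    then obtain s where s: "s \<in> St" "g \<otimes> s \<in> St" by blast
    then have "(g \<otimes> s) \<otimes> inv s \<in> St"
      using subgroup.m_closed[OF St s(2) subgroup.m_inv_closed[OF St s(1)]] by simp
    moreover have "(g \<otimes> s) \<otimes> inv s = g" using gG StG[OF s(1)] by (simp add: m_assoc)
    ultimately show False using g(2) by simp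
  qed
  have finSt: "finite St" using finite_subset[OF StH fin] .
  have "St \<union> (\<otimes>) g ` St \<subseteq> H" using StH subgroup.m_closed[OF H g(1)] by blast
  then have "card (St \<union> (\<otimes>) g ` St) \<le> card H" using card_mono[OF fin] by blast
  then show ?thesis using card_Un_disjoint[OF finSt _ disj] card_image[OF inj] finSt by simp
qed

locale set_action = group G for G :: "('g, 'b) monoid_scheme" (structure) +
  fixes act :: "'g \<Rightarrow> 'a \<Rightarrow> 'a" and S :: "'a set"
  assumes act_closed: "\<lbrakk>g \<in> carrier G; x \<in> S\<rbrakk> \<Longrightarrow> act g x \<in> S"
    and act_one: "x \<in> S \<Longrightarrow> act \<one> x = x"
    and act_mult: "\<lbrakk>g \<in> carrier G; h \<in> carrier G; x \<in> S\<rbrakk> \<Longrightarrow> act (g \<otimes> h) x = act g (act h x)"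
begin

lemma act_inv_act: "\<lbrakk>g \<in> carrier G; x \<in> S\<rbrakk> \<Longrightarrow> act (inv g) (act g x) = x"
  by (metis act_mult act_one inv_closed l_inv)

lemma act_act_inv: "\<lbrakk>g \<in> carrier G; x \<in> S\<rbrakk> \<Longrightarrow> act g (act (inv g) x) = x"
  by (metis act_mult act_one inv_closed r_inv)

lemma act_mem_iff:
  assumes H: "subgroup H G" and A: "\<And>h a. h \<in> H \<Longrightarrow> a \<in> A \<Longrightarrow> act h a \<in> A"
    and h: "h \<in> H" and x: "x \<in> S"
  shows "act h x \<in> A \<longleftrightarrow> x \<in> A"
  using A[OF subgroup.m_inv_closed[OF H h], of "act h x"] A[OF h, of x]
    act_inv_act[OF subgroup.mem_carrier[OF H h] x] by auto

lemma stab_subgroup: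
  assumes H: "subgroup H G" and x: "x \<in> S"
  shows "subgroup (stab H act x) G"
proof (rule subgroupI)
  show "stab H act x \<subseteq> carrier G" unfolding stab_def using subgroup.mem_carrier[OF H] by auto
  show "stab H act x \<noteq> {}" unfolding stab_def using subgroup.one_closed[OF H] act_one[OF x] by auto
next
  fix a assume "a \<in> stab H act x"
  then have aH: "a \<in> H" and ax: "act a x = x" unfolding stab_def by auto
  have "act (inv a) x = x" using act_inv_act[OF subgroup.mem_carrier[OF H aH] x] ax by simp
  then show "inv a \<in> stab H act x" unfolding stab_def using subgroup.m_inv_closed[OF H aH] by simp
  fix b assume "b \<in> stab H act x"
  then have bH: "b \<in> H" and bx: "act b x = x" unfolding stab_def by auto
  have "act (a \<otimes> b) x = x"
    using act_mult[OF subgroup.mem_carrier[OF H aH] subgroup.mem_carrier[OF H bH] x] ax bx by simp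
  then show "a \<otimes> b \<in> stab H act x" unfolding stab_def using subgroup.m_closed[OF H aH bH] by simp
qed

lemma conj_mem_stab:
  assumes H: "subgroup H G" and h: "h \<in> H" and x: "x \<in> S" and k: "k \<in> stab H act x"
  shows "h \<otimes> k \<otimes> inv h \<in> stab H act (act h x)"
proof -
  have hG: "h \<in> carrier G" and kG: "k \<in> carrier G" and kx: "act k x = x"
    using subgroup.mem_carrier[OF H] h k unfolding stab_def by auto
  have "act (h \<otimes> k \<otimes> inv h) (act h x) = act (h \<otimes> k) (act (inv h) (act h x))"
    using hG kG x by (intro act_mult) (auto intro: act_closed)
  also have "\<dots> = act h x" using hG kG x kx by (simp add: act_inv_act act_mult)
  finally show ?thesis
    using H h k unfolding stab_def by (simp add: subgroup.m_closed subgroup.m_inv_closed)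
qed

text \<open>Stabilizers of points in one orbit are conjugate, hence equinumerous.\<close>
lemma inv_card_stab_act:
  assumes H: "subgroup H G" and h: "h \<in> H" and x: "x \<in> S"
  shows "inv_card (stab H act (act h x)) = inv_card (stab H act x)"
proof -
  have hG: "h \<in> carrier G" using subgroup.mem_carrier[OF H h] .
  have ih: "inv h \<in> H" using subgroup.m_inv_closed[OF H h] .
  have undo: "act (inv h) (act h x) = x" using act_inv_act[OF hG x] .
  have StG: "\<And>k y. k \<in> stab H act y \<Longrightarrow> k \<in> carrier G"
    unfolding stab_def using subgroup.mem_carrier[OF H] by auto
  have "bij_betw (\<lambda>k. h \<otimes> k \<otimes> inv h) (stab H act x) (stab H act (act h x))"
  proof (rule bij_betw_byWitness[where f' = "\<lambda>k. inv h \<otimes> k \<otimes> h"])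
    show "\<forall>k\<in>stab H act x. inv h \<otimes> (h \<otimes> k \<otimes> inv h) \<otimes> h = k"
      using hG StG by (simp add: m_assoc[symmetric]) (simp add: m_assoc)
    show "\<forall>k\<in>stab H act (act h x). h \<otimes> (inv h \<otimes> k \<otimes> h) \<otimes> inv h = k"
      using hG StG by (simp add: m_assoc[symmetric]) (simp add: m_assoc)
    show "(\<lambda>k. h \<otimes> k \<otimes> inv h) ` stab H act x \<subseteq> stab H act (act h x)"
      using conj_mem_stab[OF H h x] by blast
    show "(\<lambda>k. inv h \<otimes> k \<otimes> h) ` stab H act (act h x) \<subseteq> stab H act x"
      using conj_mem_stab[OF H ih act_closed[OF hG x]] hG by (simp add: undo image_subset_iff)
  qed
  then show ?thesis unfolding inv_card_def using bij_betw_finite bij_betw_same_card by metis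
qed

lemma self_in_orbit: "\<lbrakk>subgroup H G; x \<in> S\<rbrakk> \<Longrightarrow> x \<in> orbit H act x"
  unfolding orbit_def using act_one subgroup.one_closed by (metis image_eqI)

lemma orbit_subset: "\<lbrakk>\<And>h t. h \<in> H \<Longrightarrow> t \<in> T \<Longrightarrow> act h t \<in> T; x \<in> T\<rbrakk> \<Longrightarrow> orbit H act x \<subseteq> T"
  unfolding orbit_def by auto

lemma orbit_act:
  assumes H: "subgroup H G" and h: "h \<in> H" and x: "x \<in> S"
  shows "orbit H act (act h x) = orbit H act x"
proof -
  have hG: "h \<in> carrier G" using subgroup.mem_carrier[OF H h] .
  have "act k (act h x) \<in> orbit H act x" if "k \<in> H" for k
  proof -
    have "act k (act h x) = act (k \<otimes> h) x"
      using act_mult[OF subgroup.mem_carrier[OF H that] hG x] by simp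
    then show ?thesis unfolding orbit_def using subgroup.m_closed[OF H that h] by blast
  qed
  moreover have "act k x \<in> orbit H act (act h x)" if "k \<in> H" for k
  proof -
    have "act k x = act (k \<otimes> inv h) (act h x)"
      using act_mult[OF subgroup.mem_carrier[OF H that] inv_closed[OF hG] act_closed[OF hG x]]
      by (simp add: act_inv_act[OF hG x])
    then show ?thesis
      unfolding orbit_def using subgroup.m_closed[OF H that subgroup.m_inv_closed[OF H h]] by blast
  qed
  ultimately show ?thesis unfolding orbit_def by blast
qed

lemma orbit_eq_of_mem:
  assumes "subgroup H G" "x \<in> S" "y \<in> orbit H act x"
  shows "orbit H act y = orbit H act x"
proof -
  obtain h where "h \<in> H" "y = act h x" using assms(3) unfolding orbit_def by blast
  then show ?thesis using orbit_act assms(1,2) by simp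
qed

lemma some_in_orbit: "\<lbrakk>subgroup H G; x \<in> S\<rbrakk> \<Longrightarrow> (SOME y. y \<in> orbit H act x) \<in> orbit H act x"
  using self_in_orbit by (rule someI)

lemma orbit_sum_Un:
  assumes H: "subgroup H G" and T1: "T1 \<subseteq> S" and T2: "T2 \<subseteq> S" and disj: "T1 \<inter> T2 = {}"
    and inv1: "\<And>h t. h \<in> H \<Longrightarrow> t \<in> T1 \<Longrightarrow> act h t \<in> T1"
    and inv2: "\<And>h t. h \<in> H \<Longrightarrow> t \<in> T2 \<Longrightarrow> act h t \<in> T2"
    and fin1: "finite (orbits H act T1)" and fin2: "finite (orbits H act T2)"
  shows "orbit_sum H act c (T1 \<union> T2) = orbit_sum H act c T1 + orbit_sum H act c T2"
proof -
  have "orbits H act T1 \<inter> orbits H act T2 = {}"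
  proof (rule ccontr)
    assume "orbits H act T1 \<inter> orbits H act T2 \<noteq> {}"
    then obtain t1 t2 where t: "t1 \<in> T1" "t2 \<in> T2" "orbit H act t1 = orbit H act t2"
      unfolding orbits_def by auto
    then have "t1 \<in> T2" using self_in_orbit[OF H] orbit_subset[OF inv2] T1 by blast
    then show False using t(1) disj by blast
  qed
  then show ?thesis
    unfolding orbit_sum_def orbits_def image_Un
    using fin1 fin2 unfolding orbits_def by (rule sum.union_disjoint[rotated 2])
qed

lemma some_in_orbits:
  assumes K: "subgroup K G" and T: "T \<subseteq> S" and inv: "\<And>k t. k \<in> K \<Longrightarrow> t \<in> T \<Longrightarrow> act k t \<in> T"
    and P: "P \<in> orbits K act T"
  shows "(SOME x. x \<in> P) \<in> T" "P = orbit K act (SOME x. x \<in> P)"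
proof -
  obtain t where t: "t \<in> T" "P = orbit K act t" using P unfolding orbits_def by auto
  have "(SOME x. x \<in> P) \<in> P" unfolding t(2) using some_in_orbit[OF K] t T by auto
  then show "(SOME x. x \<in> P) \<in> T" "P = orbit K act (SOME x. x \<in> P)"
    using orbit_subset[OF inv t(1)] orbit_eq_of_mem[OF K, of t] t T by auto
qed

text \<open>If the elements of H carrying a point of T into T are exactly those of K, then every
  H-orbit of a translate of T meets T in a single K-orbit.\<close>
lemma bij_betw_orbits_induced:
  assumes H: "subgroup H G" and K: "subgroup K G" and KH: "K \<subseteq> H" and T: "T \<subseteq> S"
    and stabT: "\<And>h t. h \<in> H \<Longrightarrow> t \<in> T \<Longrightarrow> act h t \<in> T \<longleftrightarrow> h \<in> K"
  shows "bij_betw (\<lambda>P. orbit H act (SOME x. x \<in> P)) (orbits K act T) (orbits H act (\<Union>h\<in>H. act h ` T))"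
proof -
  define r where "r P = (SOME x. x \<in> P)" for P :: "'a set"
  have invK: "\<And>k t. k \<in> K \<Longrightarrow> t \<in> T \<Longrightarrow> act k t \<in> T" using stabT KH by blast
  have rep: "r P \<in> T" "P = orbit K act (r P)" if "P \<in> orbits K act T" for P
    using some_in_orbits[OF K T _ that] invK unfolding r_def by blast+
  have "inj_on (\<lambda>P. orbit H act (r P)) (orbits K act T)"
  proof (rule inj_onI)
    fix P P' assume P: "P \<in> orbits K act T" and P': "P' \<in> orbits K act T"
      and eq: "orbit H act (r P) = orbit H act (r P')"
    have "r P' \<in> orbit H act (r P)" using eq self_in_orbit[OF H] rep(1)[OF P'] T by auto
    then obtain h where h: "h \<in> H" "r P' = act h (r P)" unfolding orbit_def by auto
    then have "h \<in> K" using stabT rep(1)[OF P] rep(1)[OF P'] by auto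
    then show "P = P'" using h orbit_act[OF K] rep[OF P] rep[OF P'] T by auto
  qed
  moreover have "(\<lambda>P. orbit H act (r P)) ` orbits K act T = orbits H act (\<Union>h\<in>H. act h ` T)"
  proof
    show "(\<lambda>P. orbit H act (r P)) ` orbits K act T \<subseteq> orbits H act (\<Union>h\<in>H. act h ` T)"
    proof
      fix Q assume "Q \<in> (\<lambda>P. orbit H act (r P)) ` orbits K act T"
      then obtain P where P: "P \<in> orbits K act T" and Q: "Q = orbit H act (r P)" by blast
      have "r P \<in> (\<Union>h\<in>H. act h ` T)"
        using act_one rep(1)[OF P] T subgroup.one_closed[OF H] by (metis UN_I image_eqI subsetD)
      then show "Q \<in> orbits H act (\<Union>h\<in>H. act h ` T)" unfolding orbits_def Q by blast
    qed
    show "orbits H act (\<Union>h\<in>H. act h ` T) \<subseteq> (\<lambda>P. orbit H act (r P)) ` orbits K act T"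
    proof
      fix Q assume "Q \<in> orbits H act (\<Union>h\<in>H. act h ` T)"
      then obtain h t where ht: "h \<in> H" "t \<in> T" "Q = orbit H act (act h t)"
        unfolding orbits_def by auto
      have Q: "Q = orbit H act t" using ht orbit_act[OF H] T by auto
      have P: "orbit K act t \<in> orbits K act T" using ht unfolding orbits_def by auto
      have "r (orbit K act t) \<in> orbit K act t" using rep[OF P] self_in_orbit[OF K] T by (metis subsetD)
      then obtain k where "k \<in> K" "r (orbit K act t) = act k t" unfolding orbit_def by auto
      then have "orbit H act (r (orbit K act t)) = Q" unfolding Q using orbit_act[OF H] ht T KH by auto
      then show "Q \<in> (\<lambda>P. orbit H act (r P)) ` orbits K act T" using P by auto
    qed
  qed
  ultimately show ?thesis unfolding bij_betw_def r_def by simp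
qed

lemma orbit_sum_induced:
  assumes H: "subgroup H G" and K: "subgroup K G" and KH: "K \<subseteq> H" and T: "T \<subseteq> S"
    and stabT: "\<And>h t. h \<in> H \<Longrightarrow> t \<in> T \<Longrightarrow> act h t \<in> T \<longleftrightarrow> h \<in> K"
    and c: "\<And>h x. h \<in> H \<Longrightarrow> x \<in> S \<Longrightarrow> c (act h x) = c x"
  shows "orbit_sum H act c (\<Union>h\<in>H. act h ` T) = orbit_sum K act c T"
proof -
  define r where "r P = (SOME x. x \<in> P)" for P :: "'a set"
  have invK: "\<And>k t. k \<in> K \<Longrightarrow> t \<in> T \<Longrightarrow> act k t \<in> T" using stabT KH by blast
  have rep: "r P \<in> T" "P = orbit K act (r P)" if "P \<in> orbits K act T" for P
    using some_in_orbits[OF K T _ that] invK unfolding r_def by blast+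
  have "orbit_sum H act c (\<Union>h\<in>H. act h ` T) =
      (\<Sum>P\<in>orbits K act T. c (r (orbit H act (r P))) * inv_card (stab H act (r (orbit H act (r P)))))"
    unfolding orbit_sum_def r_def[symmetric]
    by (rule sum.reindex_bij_betw[OF bij_betw_orbits_induced[OF H K KH T stabT, folded r_def], symmetric])
  also have "\<dots> = orbit_sum K act c T"
    unfolding orbit_sum_def r_def[symmetric]
  proof (rule sum.cong[OF refl])
    fix P assume P: "P \<in> orbits K act T"
    have rS: "r P \<in> S" using rep(1)[OF P] T by auto
    obtain h where h: "h \<in> H" "r (orbit H act (r P)) = act h (r P)"
      using some_in_orbit[OF H rS] unfolding r_def orbit_def by auto
    have "stab H act (r P) = stab K act (r P)"
      using stabT[of _ "r P"] rep(1)[OF P] KH unfolding stab_def by force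
    then show "c (r (orbit H act (r P))) * inv_card (stab H act (r (orbit H act (r P))))
      = c (r P) * inv_card (stab K act (r P))"
      using h c rS inv_card_stab_act[OF H h(1) rS] by simp
  qed
  finally show ?thesis .
qed

lemma inv_card_le_inv_card_stab:
  assumes "subgroup H G" "x \<in> S"
  shows "inv_card H \<le> inv_card (stab H act x)"
  using inv_card_antimono[of "stab H act x" H] subgroup.one_closed[OF stab_subgroup[OF assms]]
  unfolding stab_def by blast

lemma two_inv_card_le_inv_card_stab:
  assumes H: "subgroup H G" and fin: "finite H" and h: "h \<in> H" and x: "x \<in> S"
    and moved: "act h x \<noteq> x"
  shows "2 * inv_card H \<le> inv_card (stab H act x)"
proof -
  have StH: "stab H act x \<subseteq> H" unfolding stab_def by blast
  have finSt: "finite (stab H act x)" using finite_subset[OF StH fin] .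
  have "0 < card (stab H act x)"
    using finSt subgroup.one_closed[OF stab_subgroup[OF H x]] card_gt_0_iff by blast
  moreover have "2 * card (stab H act x) \<le> card H"
    using two_card_subgroup_le[OF H fin stab_subgroup[OF H x] StH h] moved unfolding stab_def by blast
  ultimately show ?thesis unfolding inv_card_def using fin finSt by (simp add: field_simps)
qed

lemma orbit_sum_fixed_point:
  assumes H: "subgroup H G" and v: "v \<in> S" and fixed: "\<And>h. h \<in> H \<Longrightarrow> act h v = v"
  shows "orbit_sum H act c {v} = c v * inv_card H"
proof -
  have "orbit H act v = {v}" "stab H act v = H"
    using self_in_orbit[OF H v] fixed unfolding orbit_def stab_def by auto
  then show ?thesis unfolding orbit_sum_def orbits_def by simp
qed

lemma two_inv_card_le_orbit_sum:
  assumes H: "subgroup H G" and fin: "finite H" and T: "T \<subseteq> S"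
    and inv: "\<And>h t. h \<in> H \<Longrightarrow> t \<in> T \<Longrightarrow> act h t \<in> T" and finT: "finite (orbits H act T)"
    and uw: "u \<in> T" "w \<in> T" "u \<noteq> w" and c: "0 \<le> c"
  shows "2 * c * inv_card H \<le> orbit_sum H act (\<lambda>_. c) T"
proof -
  define r where "r Orb = (SOME x. x \<in> Orb)" for Orb :: "'a set"
  define tm where "tm Orb = c * inv_card (stab H act (r Orb))" for Orb
  have sum: "orbit_sum H act (\<lambda>_. c) T = sum tm (orbits H act T)"
    unfolding orbit_sum_def tm_def r_def ..
  have tm_nonneg: "0 \<le> tm Orb" for Orb
    unfolding tm_def by (rule mult_nonneg_nonneg[OF c inv_card_nonneg])
  have r: "r (orbit H act x) \<in> orbit H act x" if "x \<in> T" for x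
    using some_in_orbit[OF H] that T unfolding r_def by blast
  have rT: "r (orbit H act x) \<in> T" if "x \<in> T" for x
    using r[OF that] orbit_subset[OF inv that] by blast
  have tm_ge: "c * inv_card H \<le> tm (orbit H act x)" if "x \<in> T" for x
    unfolding tm_def using inv_card_le_inv_card_stab[OF H] rT[OF that] T c
    by (simp add: mult_left_mono subset_iff)
  show ?thesis
  proof (cases "orbit H act u = orbit H act w")
    case False
    have "tm (orbit H act u) + tm (orbit H act w) = sum tm {orbit H act u, orbit H act w}"
      using False by simp
    also have "\<dots> \<le> sum tm (orbits H act T)"
      using uw unfolding orbits_def by (intro sum_mono2[OF finT[unfolded orbits_def]] tm_nonneg) auto
    finally show ?thesis using tm_ge[OF uw(1)] tm_ge[OF uw(2)] sum by linarith
  next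
    case True
    define x where "x = r (orbit H act u)"
    have xS: "x \<in> S" using rT[OF uw(1)] T unfolding x_def by blast
    obtain y where y: "y \<in> {u, w}" "y \<noteq> x" using uw(3) by blast
    have "y \<in> orbit H act x"
      using y(1) True orbit_eq_of_mem[OF H _ r[OF uw(1)]] self_in_orbit[OF H] uw T
      unfolding x_def by auto
    then obtain g where g: "g \<in> H" "y = act g x" unfolding orbit_def by blast
    then have "2 * inv_card H \<le> inv_card (stab H act x)"
      using two_inv_card_le_inv_card_stab[OF H fin g(1) xS] y(2) by simp
    then have "2 * c * inv_card H \<le> tm (orbit H act u)"
      unfolding tm_def x_def[symmetric] using mult_left_mono[OF _ c] by fastforce
    also have "\<dots> \<le> sum tm (orbits H act T)"
      using uw(1) unfolding orbits_def
      by (intro member_le_sum tm_nonneg finT[unfolded orbits_def]) auto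
    finally show ?thesis using sum by simp
  qed
qed

end

section \<open>Angled G-graphs\<close>

lemma size_2_mset_eq:
  assumes "size M = 2"
  shows "\<exists>a b. M = {#a, b#}"
proof -
  obtain a where "a \<in># M" using size_eq_Suc_imp_elem[of M 1] assms by auto
  then have "M = add_mset a (M - {#a#})" "size (M - {#a#}) = 1"
    using assms by (auto simp: size_Diff_singleton)
  then show ?thesis using size_1_singleton_mset by metis
qed

definition adj :: "('e \<Rightarrow> 'v multiset) \<Rightarrow> 'e set \<Rightarrow> ('v \<times> 'v) set" where
  "adj ends D = {(x, y). \<exists>e\<in>D. ends e = {#x, y#}}"

lemma sym_adj: "sym (adj ends D)"
  unfolding adj_def sym_def by (auto simp: add_mset_commute)

lemma rtrancl_adj_sym: "(x, y) \<in> (adj ends D)\<^sup>* \<Longrightarrow> (y, x) \<in> (adj ends D)\<^sup>*"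
  using sym_rtrancl[OF sym_adj] by (rule symD)

lemma H_sectionD:
  assumes "H_section H V E ends actv acte DV DE"
  shows "DV \<subseteq> V" "DE \<subseteq> E" "\<And>e. e \<in> DE \<Longrightarrow> set_mset (ends e) \<subseteq> DV"
    "\<And>h v. h \<in> H \<Longrightarrow> v \<in> DV \<Longrightarrow> actv h v \<in> DV" "\<And>h e. h \<in> H \<Longrightarrow> e \<in> DE \<Longrightarrow> acte h e \<in> DE"
    "finite (orbits H actv DV)" "finite (orbits H acte DE)"
  using assms unfolding H_section_def by (auto simp: image_subset_iff)

locale angled_graph =
  fixes G :: "('g, 'b) monoid_scheme" and V :: "'v set" and E :: "'e set"
    and ends :: "'e \<Rightarrow> 'v multiset" and actv :: "'g \<Rightarrow> 'v \<Rightarrow> 'v" and acte :: "'g \<Rightarrow> 'e \<Rightarrow> 'e"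
    and ang :: "'e \<Rightarrow> real"
  assumes angled: "angled_G_graph G V E ends actv acte ang"

sublocale angled_graph \<subseteq> vertex: set_action G actv V
  using angled unfolding angled_G_graph_def G_graph_def set_action_def set_action_axioms_def by blast

sublocale angled_graph \<subseteq> edge: set_action G acte E
  using angled unfolding angled_G_graph_def G_graph_def set_action_def set_action_axioms_def by blast

context angled_graph
begin

lemma ends_act: "\<lbrakk>g \<in> carrier G; e \<in> E\<rbrakk> \<Longrightarrow> ends (acte g e) = image_mset (actv g) (ends e)"
  using angled unfolding angled_G_graph_def G_graph_def by blast

lemma size_ends: "e \<in> E \<Longrightarrow> size (ends e) = 2"
  using angled unfolding angled_G_graph_def G_graph_def graph_def by blast

lemma ang_act: "\<lbrakk>g \<in> carrier G; e \<in> E\<rbrakk> \<Longrightarrow> ang (acte g e) = ang e"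
  using angled unfolding angled_G_graph_def by blast

lemma rtrancl_adj_act:
  assumes g: "g \<in> carrier G" and D: "D \<subseteq> E" "acte g ` D \<subseteq> D"
    and xy: "(x, y) \<in> (adj ends D)\<^sup>*"
  shows "(actv g x, actv g y) \<in> (adj ends D)\<^sup>*"
  using xy
proof (induction rule: rtrancl_induct)
  case (step y z)
  then obtain e where "e \<in> D" "ends e = {#y, z#}" unfolding adj_def by auto
  then have "(actv g y, actv g z) \<in> adj ends D"
    using ends_act[OF g] D unfolding adj_def by force
  then show ?case by (rule rtrancl_into_rtrancl[OF step.IH])
qed simp

lemma edgeless_curvature_pos_iff:
  assumes H: "subgroup H G" and sec: "H_section H V E ends actv acte DV {}" and ne: "DV \<noteq> {}"
  shows "curvature H actv acte ang DV {} > 0 \<longleftrightarrow> (\<exists>v. DV = {v}) \<and> finite H"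
proof -
  note secD = H_sectionD[OF sec]
  have curv: "curvature H actv acte ang DV {} = 2 * pi * inv_card H - orbit_sum H actv (\<lambda>_. pi) DV"
    unfolding curvature_eq_orbit_sum by simp
  consider "infinite H" | v where "finite H" "DV = {v}" | u w where "finite H" "u \<in> DV" "w \<in> DV" "u \<noteq> w"
    using ne by (metis insertI1 subsetI subset_singleton_iff)
  then show ?thesis
  proof cases
    case 1
    then show ?thesis using curv orbit_sum_nonneg[of "\<lambda>_. pi" H actv DV] by (simp add: inv_card_def)
  next
    case (2 v)
    have "orbit_sum H actv (\<lambda>_. pi) DV = pi * inv_card H"
      using vertex.orbit_sum_fixed_point[OF H] secD(1,4) 2 by simp
    moreover have "0 < inv_card H"
      using 2 subgroup.one_closed[OF H] card_gt_0_iff unfolding inv_card_def by fastforce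
    ultimately show ?thesis using curv 2 by simp
  next
    case 3
    then have "2 * pi * inv_card H \<le> orbit_sum H actv (\<lambda>_. pi) DV"
      using vertex.two_inv_card_le_orbit_sum[OF H _ secD(1) secD(4) secD(6)] by simp
    then show ?thesis using curv 3 by auto
  qed
qed

end

section \<open>Splitting off the translates of a component\<close>

lemma spurless_subgraph:
  assumes "spurless DV DE ends" "DV' \<subseteq> DV" "DE' \<subseteq> DE"
    and "\<And>v e. v \<in> DV' \<Longrightarrow> e \<in> DE \<Longrightarrow> v \<in># ends e \<Longrightarrow> e \<in> DE'"
  shows "spurless DV' DE' ends"
proof -
  have "{e \<in> DE'. v \<in># ends e} = {e \<in> DE. v \<in># ends e}" if "v \<in> DV'" for v
    using assms(3,4) that by blast
  then show ?thesis using assms(1,2) unfolding spurless_def valence_one_def by auto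
qed

locale section_component = angled_graph +
  fixes H :: "'g set" and DV :: "'v set" and DE :: "'e set" and e0 :: 'e and v0 :: 'v
  assumes subgroup_H: "subgroup H G" and sec: "H_section H V E ends actv acte DV DE"
    and e0: "e0 \<in> DE" and v0: "v0 \<in># ends e0"
begin

definition component :: "'v set" where
  "component = {w. (v0, w) \<in> (adj ends DE)\<^sup>*}"

definition component_edges :: "'e set" where
  "component_edges = {e \<in> DE. \<exists>x. x \<in># ends e \<and> x \<in> component}"

text \<open>Since H preserves adjacency, this is the setwise stabilizer of the component in H.\<close>
definition component_stab :: "'g set" where
  "component_stab = {h \<in> H. actv h v0 \<in> component}"

definition translates :: "'v set" where
  "translates = (\<Union>h\<in>H. actv h ` component)"

definition edge_translates :: "'e set" where
  "edge_translates = (\<Union>h\<in>H. acte h ` component_edges)"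

lemmas secD = H_sectionD[OF sec]

lemma H_carrier: "h \<in> H \<Longrightarrow> h \<in> carrier G"
  using subgroup.mem_carrier[OF subgroup_H] .

lemma v0_in_component: "v0 \<in> component"
  unfolding component_def by simp

lemma component_subset: "component \<subseteq> DV"
proof
  fix w assume "w \<in> component"
  then have "(v0, w) \<in> (adj ends DE)\<^sup>*" unfolding component_def by simp
  then show "w \<in> DV"
  proof (induction rule: rtrancl_induct)
    case base show ?case using secD(3)[OF e0] v0 by blast
  next
    case (step y z)
    then obtain e where "e \<in> DE" "ends e = {#y, z#}" unfolding adj_def by auto
    then show ?case using secD(3) by fastforce
  qed
qed

lemma component_in_rtrancl: "\<lbrakk>u \<in> component; w \<in> component\<rbrakk> \<Longrightarrow> (u, w) \<in> (adj ends DE)\<^sup>*"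
  unfolding component_def using rtrancl_adj_sym rtrancl_trans by (metis mem_Collect_eq)

lemma component_act_iff:
  assumes h: "h \<in> H" and t: "t \<in> component"
  shows "actv h t \<in> component \<longleftrightarrow> h \<in> component_stab"
proof -
  have "acte h ` DE \<subseteq> DE" using secD(5) h by blast
  then have "(actv h v0, actv h t) \<in> (adj ends DE)\<^sup>*"
    using rtrancl_adj_act[OF H_carrier[OF h] secD(2)] component_in_rtrancl[OF v0_in_component t] by blast
  then show ?thesis
    unfolding component_stab_def component_def using h rtrancl_adj_sym rtrancl_trans
    by (metis (no_types, lifting) mem_Collect_eq)
qed

lemma component_stab_subset: "component_stab \<subseteq> H"
  unfolding component_stab_def by blast

lemma component_stab_subgroup: "subgroup component_stab G"
proof (rule vertex.subgroupI)
  show "component_stab \<subseteq> carrier G" using component_stab_subset H_carrier by blast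
  have "actv \<one>\<^bsub>G\<^esub> v0 = v0" using vertex.act_one component_subset secD(1) v0_in_component by blast
  then show "component_stab \<noteq> {}"
    unfolding component_stab_def using subgroup.one_closed[OF subgroup_H] v0_in_component by auto
next
  fix a assume a: "a \<in> component_stab"
  then have aH: "a \<in> H" and "actv a v0 \<in> component" unfolding component_stab_def by auto
  moreover have "actv (inv\<^bsub>G\<^esub> a) (actv a v0) = v0"
    using vertex.act_inv_act H_carrier[OF aH] component_subset secD(1) v0_in_component by blast
  ultimately show "inv\<^bsub>G\<^esub> a \<in> component_stab"
    using component_act_iff[OF subgroup.m_inv_closed[OF subgroup_H aH]] v0_in_component by metis
  fix b assume "b \<in> component_stab"
  then have bH: "b \<in> H" and "actv b v0 \<in> component" unfolding component_stab_def by auto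
  then have "actv a (actv b v0) \<in> component" using component_act_iff[OF aH] a by blast
  moreover have "actv (a \<otimes>\<^bsub>G\<^esub> b) v0 = actv a (actv b v0)"
    using vertex.act_mult H_carrier[OF aH] H_carrier[OF bH] component_subset secD(1) v0_in_component by blast
  ultimately show "a \<otimes>\<^bsub>G\<^esub> b \<in> component_stab"
    unfolding component_stab_def using subgroup.m_closed[OF subgroup_H aH bH] by simp
qed

lemma ends_component_edges: "e \<in> component_edges \<Longrightarrow> set_mset (ends e) \<subseteq> component"
proof -
  assume e: "e \<in> component_edges"
  then obtain x where x: "x \<in># ends e" "x \<in> component" and eDE: "e \<in> DE" unfolding component_edges_def by blast
  obtain a b where ab: "ends e = {#a, b#}" using size_2_mset_eq size_ends secD(2) eDE by blast
  then have "(a, b) \<in> adj ends DE" using eDE unfolding adj_def by blast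
  then have "(a, b) \<in> adj ends DE" "(b, a) \<in> adj ends DE" using symD[OF sym_adj[of ends DE]] by blast+
  then show ?thesis using x ab unfolding component_def by (auto intro: rtrancl_into_rtrancl)
qed

lemma component_edges_act_iff:
  assumes h: "h \<in> H" and e: "e \<in> component_edges"
  shows "acte h e \<in> component_edges \<longleftrightarrow> h \<in> component_stab"
proof -
  obtain x where x: "x \<in># ends e" "x \<in> component" and eDE: "e \<in> DE" using e unfolding component_edges_def by blast
  have hx: "actv h x \<in># ends (acte h e)" using ends_act[OF H_carrier[OF h]] secD(2) eDE x(1) by auto
  show ?thesis
  proof
    assume "acte h e \<in> component_edges"
    then show "h \<in> component_stab" using ends_component_edges hx component_act_iff[OF h x(2)] by blast
  next
    assume "h \<in> component_stab"
    then show "acte h e \<in> component_edges"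
      unfolding component_edges_def using hx component_act_iff[OF h x(2)] secD(5)[OF h eDE] by blast
  qed
qed

lemma component_connected: "graph_connected component component_edges ends"
proof -
  have "(v0, w) \<in> (adj ends component_edges)\<^sup>*" if "w \<in> component" for w
    using that unfolding component_def mem_Collect_eq
  proof (induction rule: rtrancl_induct)
    case (step y z)
    then obtain e where "e \<in> DE" "ends e = {#y, z#}" unfolding adj_def by auto
    moreover have "y \<in> component" using step(1) unfolding component_def by simp
    ultimately have "(y, z) \<in> adj ends component_edges" unfolding adj_def component_edges_def by force
    then show ?case by (rule rtrancl_into_rtrancl[OF step.IH])
  qed simp
  then show ?thesis
    unfolding graph_connected_def adj_def[symmetric] using rtrancl_adj_sym rtrancl_trans by metis
qed

lemma component_subset_V: "component \<subseteq> V"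
  using component_subset secD(1) by blast

lemma component_edges_subset: "component_edges \<subseteq> DE"
  unfolding component_edges_def by blast

lemma translates_subset: "translates \<subseteq> DV"
  unfolding translates_def using component_subset secD(4) by blast

lemma edge_translates_subset: "edge_translates \<subseteq> DE"
  unfolding edge_translates_def using component_edges_subset secD(5) by blast

lemma orbits_translates_bij:
  "bij_betw (\<lambda>P. orbit H actv (SOME x. x \<in> P)) (orbits component_stab actv component)
     (orbits H actv translates)"
  unfolding translates_def
  by (rule vertex.bij_betw_orbits_induced[OF subgroup_H component_stab_subgroup
        component_stab_subset component_subset_V component_act_iff])

lemma orbits_edge_translates_bij:
  "bij_betw (\<lambda>P. orbit H acte (SOME x. x \<in> P)) (orbits component_stab acte component_edges)
     (orbits H acte edge_translates)"
  unfolding edge_translates_def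
  using component_edges_subset secD(2)
  by (intro edge.bij_betw_orbits_induced[OF subgroup_H component_stab_subgroup
        component_stab_subset _ component_edges_act_iff]) auto

lemma finite_orbits_translates: "finite (orbits H actv translates)"
  using secD(6) translates_subset unfolding orbits_def by (meson finite_subset image_mono)

lemma finite_orbits_edge_translates: "finite (orbits H acte edge_translates)"
  using secD(7) edge_translates_subset unfolding orbits_def by (meson finite_subset image_mono)

lemma regular_section_component:
  assumes "spurless DV DE ends"
  shows "regular_section component_stab V E ends actv acte component component_edges"
  unfolding regular_section_def
proof (intro conjI)
  have "finite (orbits component_stab actv component)"
    using orbits_translates_bij finite_orbits_translates bij_betw_finite by blast
  moreover have "finite (orbits component_stab acte component_edges)"
    using orbits_edge_translates_bij finite_orbits_edge_translates bij_betw_finite by blast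
  ultimately show "H_section component_stab V E ends actv acte component component_edges"
    unfolding H_section_def using component_subset_V component_edges_subset secD(2) ends_component_edges
      component_act_iff component_edges_act_iff component_stab_subset by blast
  show "spurless component component_edges ends"
    using assms component_subset component_edges_subset
    by (rule spurless_subgraph) (auto simp: component_edges_def)
  show "graph_connected component component_edges ends" by (rule component_connected)
  show "component_edges \<noteq> {}" unfolding component_edges_def using e0 v0 v0_in_component by blast
qed

lemma translates_act: "\<lbrakk>h \<in> H; x \<in> translates\<rbrakk> \<Longrightarrow> actv h x \<in> translates"
proof -
  assume h: "h \<in> H" and "x \<in> translates"
  then obtain k c where k: "k \<in> H" "c \<in> component" "x = actv k c" unfolding translates_def by blast
  then have "actv h x = actv (h \<otimes>\<^bsub>G\<^esub> k) c"
    using vertex.act_mult H_carrier h component_subset_V by auto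
  then show "actv h x \<in> translates"
    unfolding translates_def using k subgroup.m_closed[OF subgroup_H h k(1)] by blast
qed

lemma edge_translates_act: "\<lbrakk>h \<in> H; e \<in> edge_translates\<rbrakk> \<Longrightarrow> acte h e \<in> edge_translates"
proof -
  assume h: "h \<in> H" and "e \<in> edge_translates"
  then obtain k c where k: "k \<in> H" "c \<in> component_edges" "e = acte k c"
    unfolding edge_translates_def by blast
  then have "acte h e = acte (h \<otimes>\<^bsub>G\<^esub> k) c"
    using edge.act_mult H_carrier h component_edges_subset secD(2) by auto
  then show "acte h e \<in> edge_translates"
    unfolding edge_translates_def using k subgroup.m_closed[OF subgroup_H h k(1)] by blast
qed

lemma ends_edge_translates: "e \<in> edge_translates \<Longrightarrow> set_mset (ends e) \<subseteq> translates"
proof -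
  assume "e \<in> edge_translates"
  then obtain h c where h: "h \<in> H" "c \<in> component_edges" "e = acte h c"
    unfolding edge_translates_def by blast
  then have "ends e = image_mset (actv h) (ends c)"
    using ends_act H_carrier component_edges_subset secD(2) by blast
  then show ?thesis using ends_component_edges[OF h(2)] h(1) unfolding translates_def by auto
qed

lemma edge_at_translates:
  assumes e: "e \<in> DE" and x: "x \<in># ends e" "x \<in> translates"
  shows "e \<in> edge_translates"
proof -
  obtain h c where h: "h \<in> H" "c \<in> component" "x = actv h c" using x(2) unfolding translates_def by blast
  have hG: "h \<in> carrier G" and ih: "inv\<^bsub>G\<^esub> h \<in> H"
    using H_carrier[OF h(1)] subgroup.m_inv_closed[OF subgroup_H h(1)] by auto
  have eE: "e \<in> E" using e secD(2) by blast
  have "actv (inv\<^bsub>G\<^esub> h) x = c" using vertex.act_inv_act[OF hG] h component_subset_V by blast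
  then have "c \<in># ends (acte (inv\<^bsub>G\<^esub> h) e)"
    using ends_act[OF H_carrier[OF ih] eE] x(1) by force
  then have "acte (inv\<^bsub>G\<^esub> h) e \<in> component_edges"
    unfolding component_edges_def using secD(5)[OF ih e] h(2) by blast
  moreover have "acte h (acte (inv\<^bsub>G\<^esub> h) e) = e" using edge.act_act_inv[OF hG eE] .
  ultimately show ?thesis unfolding edge_translates_def using h(1) by force
qed

lemma H_section_rest: "H_section H V E ends actv acte (DV - translates) (DE - edge_translates)"
proof -
  have "actv h x \<in> DV - translates" if "h \<in> H" "x \<in> DV - translates" for h x
    using vertex.act_mem_iff[OF subgroup_H translates_act that(1)] secD(1,4) that by blast
  moreover have "acte h e \<in> DE - edge_translates" if "h \<in> H" "e \<in> DE - edge_translates" for h e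
    using edge.act_mem_iff[OF subgroup_H edge_translates_act that(1)] secD(2,5) that by blast
  moreover have "set_mset (ends e) \<subseteq> DV - translates" if "e \<in> DE - edge_translates" for e
    using edge_at_translates secD(3) that by blast
  moreover have "finite (orbits H actv (DV - translates))" "finite (orbits H acte (DE - edge_translates))"
    using secD(6,7) unfolding orbits_def by (auto intro: finite_subset)
  ultimately show ?thesis unfolding H_section_def using secD(1,2) by blast
qed

lemma spurless_rest: "spurless DV DE ends \<Longrightarrow> spurless (DV - translates) (DE - edge_translates) ends"
  by (rule spurless_subgraph) (use ends_edge_translates in auto)

lemma card_orbits_rest_less: "card (orbits H actv (DV - translates)) < card (orbits H actv DV)"
proof (rule psubset_card_mono[OF secD(6)])
  have "orbit H actv v0 \<notin> orbits H actv (DV - translates)"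
  proof
    assume "orbit H actv v0 \<in> orbits H actv (DV - translates)"
    then obtain x where x: "x \<in> DV - translates" "orbit H actv v0 = orbit H actv x"
      unfolding orbits_def by blast
    then have "x \<in> orbit H actv v0" using vertex.self_in_orbit[OF subgroup_H] secD(1) by blast
    then show False using x(1) v0_in_component unfolding orbit_def translates_def by blast
  qed
  moreover have "orbit H actv v0 \<in> orbits H actv DV"
    unfolding orbits_def using v0_in_component component_subset by blast
  ultimately show "orbits H actv (DV - translates) \<subset> orbits H actv DV"
    unfolding orbits_def by blast
qed

lemma curvature_split:
  "curvature H actv acte ang DV DE =
     curvature component_stab actv acte ang component component_edges - 2 * pi * inv_card component_stab
     + curvature H actv acte ang (DV - translates) (DE - edge_translates)"
proof -
  note rest = H_sectionD[OF H_section_rest]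
  have "DV = translates \<union> (DV - translates)" "DE = edge_translates \<union> (DE - edge_translates)"
    using translates_subset edge_translates_subset by auto
  then have "orbit_sum H actv c DV = orbit_sum H actv c translates + orbit_sum H actv c (DV - translates)"
    and "orbit_sum H acte c' DE = orbit_sum H acte c' edge_translates + orbit_sum H acte c' (DE - edge_translates)"
    for c c'
    using vertex.orbit_sum_Un[OF subgroup_H _ rest(1) _ translates_act rest(4) finite_orbits_translates rest(6)]
      edge.orbit_sum_Un[OF subgroup_H _ rest(2) _ edge_translates_act rest(5) finite_orbits_edge_translates rest(7)]
      translates_subset edge_translates_subset secD(1,2) by (metis Diff_disjoint order_trans)+
  moreover have "orbit_sum H actv (\<lambda>_. pi) translates = orbit_sum component_stab actv (\<lambda>_. pi) component"
    unfolding translates_def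
    by (rule vertex.orbit_sum_induced[OF subgroup_H component_stab_subgroup component_stab_subset
          component_subset_V component_act_iff refl])
  moreover have "orbit_sum H acte (\<lambda>e. pi - ang e) edge_translates
      = orbit_sum component_stab acte (\<lambda>e. pi - ang e) component_edges"
    unfolding edge_translates_def using component_edges_subset secD(2) ang_act H_carrier
    by (intro edge.orbit_sum_induced[OF subgroup_H component_stab_subgroup component_stab_subset _
          component_edges_act_iff]) auto
  ultimately show ?thesis unfolding curvature_eq_orbit_sum by simp
qed

end

locale curvature_bounded = angled_graph +
  fixes \<alpha> :: real
  assumes alpha_nonpos: "\<alpha> \<le> 0"
    and regular_curvature_le: "\<And>K DV DE. subgroup K G \<Longrightarrow> regular_section K V E ends actv acte DV DE
      \<Longrightarrow> curvature K actv acte ang DV DE \<le> \<alpha>"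
begin

lemma spurless_curvature_le:
  assumes H: "subgroup H G"
  shows "\<lbrakk>H_section H V E ends actv acte DV DE; spurless DV DE ends; DE \<noteq> {}\<rbrakk>
    \<Longrightarrow> curvature H actv acte ang DV DE \<le> \<alpha>"
proof (induction "card (orbits H actv DV)" arbitrary: DV DE rule: less_induct)
  case less
  obtain e0 v0 where "e0 \<in> DE" "v0 \<in># ends e0"
    using less.prems(3) size_ends H_sectionD(2)[OF less.prems(1)]
    by (metis ex_in_conv multiset_nonemptyE size_empty subsetD zero_neq_numeral)
  then interpret section_component G V E ends actv acte ang H DV DE e0 v0
    using H less.prems(1) angled_graph_axioms
    by (simp add: section_component_def section_component_axioms_def)
  have "curvature component_stab actv acte ang component component_edges \<le> \<alpha>"
    using regular_curvature_le[OF component_stab_subgroup regular_section_component[OF less.prems(2)]] .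
  moreover have "curvature H actv acte ang (DV - translates) (DE - edge_translates) \<le> 2 * pi * inv_card H"
  proof (cases "DE - edge_translates = {}")
    case True
    then show ?thesis
      unfolding curvature_eq_orbit_sum True using orbit_sum_nonneg[of "\<lambda>_. pi" H actv] by simp
  next
    case False
    then have "curvature H actv acte ang (DV - translates) (DE - edge_translates) \<le> \<alpha>"
      using less.hyps[OF card_orbits_rest_less H_section_rest spurless_rest[OF less.prems(2)]] by blast
    moreover have "0 \<le> 2 * pi * inv_card H" using inv_card_nonneg[of H] by simp
    ultimately show ?thesis using alpha_nonpos by linarith
  qed
  moreover have "inv_card H \<le> inv_card component_stab"
    using inv_card_antimono[OF component_stab_subset] subgroup.one_closed[OF component_stab_subgroup] by blast
  then have "2 * pi * inv_card H \<le> 2 * pi * inv_card component_stab" by simp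
  ultimately show ?case unfolding curvature_split by linarith
qed

end

theorem proposition7p2:
  fixes G :: "('g, 'b) monoid_scheme"
    and V :: "'v set" and E :: "'e set" and ends :: "'e \<Rightarrow> 'v multiset"
    and actv :: "'g \<Rightarrow> 'v \<Rightarrow> 'v" and acte :: "'g \<Rightarrow> 'e \<Rightarrow> 'e" and ang :: "'e \<Rightarrow> real"
    and \<alpha> :: real and H :: "'g set" and DV :: "'v set" and DE :: "'e set"
  assumes "angled_G_graph G V E ends actv acte ang"
    and "\<alpha> \<le> 0"
    and "\<And>K DV' DE'. subgroup K G \<Longrightarrow> regular_section K V E ends actv acte DV' DE'
           \<Longrightarrow> curvature K actv acte ang DV' DE' \<le> \<alpha>"
    and "subgroup H G"
    and "H_section H V E ends actv acte DV DE"
    and "spurless DV DE ends"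
    and "DV \<noteq> {}"
  shows "(DE \<noteq> {} \<longrightarrow> curvature H actv acte ang DV DE \<le> \<alpha>) \<and>
         (curvature H actv acte ang DV DE > 0 \<longleftrightarrow>
            ((\<exists>v. DV = {v}) \<and> DE = {} \<and> finite H))"
proof -
  interpret curvature_bounded G V E ends actv acte ang \<alpha>
    using assms(1-3) by (simp add: curvature_bounded_def curvature_bounded_axioms_def angled_graph_def)
  show ?thesis
  proof (cases "DE = {}")
    case True
    then show ?thesis using edgeless_curvature_pos_iff[OF assms(4)] assms(5,7) by simp
  next
    case False
    then show ?thesis using spurless_curvature_le[OF assms(4-6)] alpha_nonpos by auto
  qed
qed

end
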